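(* In the setting below, let $p,q\in X$ have the same support $S_p=S_q$ with $|S_p|>2$. If both $p$ and $q$ have strange indices, then these strange indices coincide.
   Context: Setting: $E=\{e_0,\dots,e_n\}\subset\mathbb R^n$ is the vertex set of an $n$-simplex with $e_0+\cdots+e_n=0$, and $X\subset\mathbb R^n\setminus\{0\}$ is a finite set with $E\subseteq X$, no element of $X$ a positive multiple of another, such that every $n+1$ points of $X$ are in good position. (A finite set $A$ is in conical position if $0\notin\operatorname{conv}A$ and no point of $A$ lies in the positive hull—set of nonnegative linear combinations—of the other points; it is in good position otherwise.) For $p\in X$, the support $S_p$ is the minimal subset of $E$ whose positive hull contains $p$; then $p=\sum_{e_i\in S_p}\lambda_ie_i$ uniquely with all $\lambda_i>0$. Convention: each $p\in X$ is replaced by the positive multiple for which $\min_{e_i\in S_p}\lambda_i=1$. An element $e_j\in S_p$ is a strange index of $p$ if $\lambda_j>1$ (under these hypotheses there is at most one). *)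

theory Defs
  imports "HOL-Analysis.Analysis"
begin

definition pos_hull :: "'a::real_vector set \<Rightarrow> 'a set" where
  "pos_hull A = {x. \<exists>c. (\<forall>a\<in>A. 0 \<le> c a) \<and> x = (\<Sum>a\<in>A. c a *\<^sub>R a)}"

definition conical_position :: "'a::real_vector set \<Rightarrow> bool" where
  "conical_position A \<longleftrightarrow> 0 \<notin> convex hull A \<and> (\<forall>a\<in>A. a \<notin> pos_hull (A - {a}))"

definition good_position :: "'a::real_vector set \<Rightarrow> bool" where
  "good_position A \<longleftrightarrow> \<not> conical_position A"

definition support :: "'a::real_vector set \<Rightarrow> 'a \<Rightarrow> 'a set" where
  "support E p = (THE S. S \<subseteq> E \<and> p \<in> pos_hull S \<and> (\<forall>T. T \<subset> S \<longrightarrow> p \<notin> pos_hull T))"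

definition coeffs :: "'a::real_vector set \<Rightarrow> 'a \<Rightarrow> 'a \<Rightarrow> real" where
  "coeffs E p = (THE l. (\<forall>e\<in>support E p. 0 < l e) \<and> (\<forall>e. e \<notin> support E p \<longrightarrow> l e = 0)
                      \<and> p = (\<Sum>e\<in>support E p. l e *\<^sub>R e))"

definition norm_coeffs :: "'a::real_vector set \<Rightarrow> 'a \<Rightarrow> 'a \<Rightarrow> real" where
  "norm_coeffs E p e = coeffs E p e / Min (coeffs E p ` support E p)"

definition strange_index :: "'a::real_vector set \<Rightarrow> 'a \<Rightarrow> 'a \<Rightarrow> bool" where
  "strange_index E p e \<longleftrightarrow> e \<in> support E p \<and> norm_coeffs E p e > 1"

end

theory Submission
  imports Defs
begin

text \<open>
  Since the vertices of E are affinely independent and sum to zero, their only linear relations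
  are the multiples of (1, ..., 1). Hence every point has a unique nonnegative coefficient vector
  on E vanishing somewhere, whose positive entries form its support, and a linear relation among
  points off E and some of the vertices has constant coefficients when rewritten on E.
  Exchanging a vertex of minimal coefficient of p for p therefore gives n + 1 points in conical
  position as soon as two coefficients of p exceed the minimum; so all coefficients of p off its
  strange index are minimal. If p and q had the same support and distinct strange indices j and
  k, exchanging a support vertex r other than j, k and a vertex m outside the support for p and q
  would again give n + 1 points in conical position, since the excesses of p at j and of q at k
  pull in opposite directions.
\<close>

lemma const_coeffs_if_lincomb_eq_0:
  fixes E :: "'a::real_vector set"
  assumes fin: "finite E" and indep: "\<not> affine_dependent E" and sum0: "(\<Sum>e\<in>E. e) = 0"
    and rel: "(\<Sum>e\<in>E. f e *\<^sub>R e) = 0" and x: "x \<in> E" and y: "y \<in> E"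
  shows "f x = f y"
proof -
  define c where "c = sum f E / real (card E)"
  define u where "u = (\<lambda>e. f e - c)"
  have "card E \<noteq> 0" using fin x by auto
  then have "sum u E = 0" by (simp add: u_def c_def sum_subtractf)
  moreover have "(\<Sum>e\<in>E. u e *\<^sub>R e) = (\<Sum>e\<in>E. f e *\<^sub>R e) - c *\<^sub>R (\<Sum>e\<in>E. e)"
    by (simp add: u_def scaleR_diff_left sum_subtractf scaleR_sum_right)
  ultimately have "\<forall>v\<in>E. u v = 0"
    using indep rel sum0 affine_dependent_explicit_finite[OF fin] by auto
  with x y show ?thesis by (simp add: u_def)
qed

lemma conical_positionI:
  fixes A :: "'a::real_vector set"
  assumes fin: "finite A"
    and no_nonneg_relation:
      "\<And>d. (\<Sum>a\<in>A. d a *\<^sub>R a) = 0 \<Longrightarrow> \<forall>a\<in>A. 0 \<le> d a \<Longrightarrow> \<forall>a\<in>A. d a = 0"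
    and no_pos_hull_relation:
      "\<And>d a0. a0 \<in> A \<Longrightarrow> (\<Sum>a\<in>A. d a *\<^sub>R a) = 0 \<Longrightarrow> d a0 = -1 \<Longrightarrow>
         \<forall>a\<in>A - {a0}. 0 \<le> d a \<Longrightarrow> False"
  shows "conical_position A"
  unfolding conical_position_def
proof
  show "0 \<notin> convex hull A"
  proof
    assume "0 \<in> convex hull A"
    then obtain u where "\<forall>x\<in>A. 0 \<le> u x" "sum u A = 1" "(\<Sum>x\<in>A. u x *\<^sub>R x) = 0"
      unfolding convex_hull_finite[OF fin] by blast
    with no_nonneg_relation show False by fastforce
  qed
  show "\<forall>a\<in>A. a \<notin> pos_hull (A - {a})"
  proof (intro ballI notI)
    fix a0 assume a0: "a0 \<in> A" "a0 \<in> pos_hull (A - {a0})"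
    then obtain c where c: "\<forall>a\<in>A - {a0}. 0 \<le> c a" "a0 = (\<Sum>a\<in>A - {a0}. c a *\<^sub>R a)"
      unfolding pos_hull_def by blast
    define d where "d = c(a0 := -1)"
    have "(\<Sum>a\<in>A. d a *\<^sub>R a) = d a0 *\<^sub>R a0 + (\<Sum>a\<in>A - {a0}. d a *\<^sub>R a)"
      using fin a0(1) by (simp add: sum.remove)
    also have "(\<Sum>a\<in>A - {a0}. d a *\<^sub>R a) = (\<Sum>a\<in>A - {a0}. c a *\<^sub>R a)"
      by (rule sum.cong) (auto simp: d_def)
    finally have "(\<Sum>a\<in>A. d a *\<^sub>R a) = 0" using c(2) by (simp add: d_def)
    with a0(1) c(1) show False
      by (intro no_pos_hull_relation[of a0 d]) (auto simp: d_def)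
  qed
qed

definition min_coeff :: "'a::real_vector set \<Rightarrow> 'a \<Rightarrow> real" where
  "min_coeff E p = Min (coeffs E p ` support E p)"

locale centred_simplex =
  fixes E :: "'a::euclidean_space set"
  assumes card_E: "card E = DIM('a) + 1"
    and indep_E: "\<not> affine_dependent E"
    and sum_E: "(\<Sum>e\<in>E. e) = 0"
begin

lemma finite_E: "finite E"
  using card_E card.infinite by fastforce

text \<open>F - G is constant on E, nonpositive at a zero of F and nonnegative at a zero of G.\<close>
lemma nonneg_coeffs_unique:
  assumes "\<forall>e\<in>E. 0 \<le> F e" "\<forall>e\<in>E. 0 \<le> G e"
    and m: "m \<in> E" "F m = 0" and m': "m' \<in> E" "G m' = 0"
    and eq: "(\<Sum>e\<in>E. F e *\<^sub>R e) = (\<Sum>e\<in>E. G e *\<^sub>R e)" and e: "e \<in> E"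
  shows "F e = G e"
proof -
  have "(\<Sum>e\<in>E. (F e - G e) *\<^sub>R e) = 0"
    using eq by (simp add: scaleR_diff_left sum_subtractf)
  then have "F x - G x = F m - G m" if "x \<in> E" for x
    using const_coeffs_if_lincomb_eq_0[OF finite_E indep_E sum_E, of "\<lambda>e. F e - G e"] m(1) that
    by blast
  from this[OF m'(1)] this[OF e] assms(1,2) m m' show ?thesis by force
qed

lemma ex_nonneg_coeffs:
  "\<exists>F. (\<forall>e\<in>E. 0 \<le> F e) \<and> (\<exists>m\<in>E. F m = 0) \<and> (\<forall>e. e \<notin> E \<longrightarrow> F e = 0)
     \<and> p = (\<Sum>e\<in>E. F e *\<^sub>R e)"
proof -
  have "aff_dim E = DIM('a)"
    using aff_dim_affine_independent[OF indep_E] card_E by simp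
  then have "p \<in> affine hull E"
    using aff_dim_eq_full by blast
  then obtain u where u: "(\<Sum>e\<in>E. u e *\<^sub>R e) = p"
    unfolding affine_hull_finite[OF finite_E] by blast
  have "E \<noteq> {}" using card_E by auto
  then have "Min (u ` E) \<in> u ` E" using finite_E by simp
  then obtain m where m: "m \<in> E" "u m = Min (u ` E)" by auto
  define F where "F e = (if e \<in> E then u e - u m else 0)" for e
  have "(\<Sum>e\<in>E. F e *\<^sub>R e) = p"
    using u sum_E by (simp add: F_def scaleR_diff_left sum_subtractf scaleR_sum_right[symmetric])
  moreover have "\<forall>e\<in>E. 0 \<le> F e" using m finite_E by (simp add: F_def)
  ultimately show ?thesis using m by (intro exI[of _ F]) (auto simp: F_def)
qed

lemma
  assumes nonneg: "\<forall>e\<in>E. 0 \<le> F e" and m: "m \<in> E" "F m = 0"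
    and zero: "\<forall>e. e \<notin> E \<longrightarrow> F e = 0" and p: "p = (\<Sum>e\<in>E. F e *\<^sub>R e)"
  shows support_eq_if_nonneg_coeffs: "support E p = {e\<in>E. 0 < F e}"
    and coeffs_eq_if_nonneg_coeffs: "coeffs E p = F"
proof -
  define S where "S = {e\<in>E. 0 < F e}"
  have S_subset: "S \<subseteq> S'" if S': "S' \<subseteq> E" "S' \<noteq> E" "p \<in> pos_hull S'" for S'
  proof -
    obtain c where c: "\<forall>a\<in>S'. 0 \<le> c a" "p = (\<Sum>a\<in>S'. c a *\<^sub>R a)"
      using S'(3) unfolding pos_hull_def by blast
    define G where "G e = (if e \<in> S' then c e else 0)" for e
    obtain m' where m': "m' \<in> E" "m' \<notin> S'" using S'(1,2) by blast
    have "p = (\<Sum>e\<in>E. G e *\<^sub>R e)"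
      unfolding c(2) G_def by (rule sum.mono_neutral_cong_left[OF finite_E S'(1)]) auto
    then have "\<forall>e\<in>E. F e = G e"
      using nonneg_coeffs_unique[OF nonneg _ m, of G m'] c(1) m' p by (auto simp: G_def)
    then show ?thesis by (auto simp: S_def G_def split: if_splits)
  qed
  have S_proper: "S \<subset> E" using m by (force simp: S_def)
  have p_S_sum: "p = (\<Sum>e\<in>S. F e *\<^sub>R e)"
    unfolding p S_def using nonneg
    by (intro sum.mono_neutral_right[OF finite_E]) (auto simp: order.order_iff_strict)
  then have p_S: "p \<in> pos_hull S"
    unfolding pos_hull_def by (intro CollectI exI[of _ F]) (auto simp: S_def)
  have S_minimal: "p \<notin> pos_hull T" if "T \<subset> S" for T
    using that S_proper S_subset[of T] by blast
  show support: "support E p = S"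
    unfolding support_def
  proof (rule the_equality)
    show "S \<subseteq> E \<and> p \<in> pos_hull S \<and> (\<forall>T. T \<subset> S \<longrightarrow> p \<notin> pos_hull T)"
      using S_proper p_S S_minimal by blast
  next
    fix S' assume S': "S' \<subseteq> E \<and> p \<in> pos_hull S' \<and> (\<forall>T. T \<subset> S' \<longrightarrow> p \<notin> pos_hull T)"
    then have "S' \<noteq> E" using S_proper p_S by blast
    with S' have "S \<subseteq> S'" using S_subset by blast
    with S' p_S show "S' = S" by blast
  qed
  show "coeffs E p = F"
    unfolding coeffs_def support
  proof (rule the_equality)
    show "(\<forall>e\<in>S. 0 < F e) \<and> (\<forall>e. e \<notin> S \<longrightarrow> F e = 0) \<and> p = (\<Sum>e\<in>S. F e *\<^sub>R e)"
      using p_S_sum nonneg zero by (force simp: S_def)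
  next
    fix l assume l: "(\<forall>e\<in>S. 0 < l e) \<and> (\<forall>e. e \<notin> S \<longrightarrow> l e = 0) \<and> p = (\<Sum>e\<in>S. l e *\<^sub>R e)"
    have "(\<Sum>e\<in>E. l e *\<^sub>R e) = (\<Sum>e\<in>E. F e *\<^sub>R e)"
      using l S_proper sum.mono_neutral_left[OF finite_E, of S "\<lambda>e. l e *\<^sub>R e"] p by auto
    moreover have "\<forall>e\<in>E. 0 \<le> l e" using l by (metis less_eq_real_def)
    moreover have "l m = 0" using l m by (simp add: S_def)
    ultimately have "l e = F e" if "e \<in> E" for e
      using nonneg_coeffs_unique[of l F m m e] nonneg m that by blast
    then show "l = F" using l zero S_def by force
  qed
qed

lemma
  shows coeffs_nonneg: "0 \<le> coeffs E p e"
    and lincomb_coeffs: "(\<Sum>e\<in>E. coeffs E p e *\<^sub>R e) = p"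
    and support_eq_pos_coeffs: "support E p = {e. 0 < coeffs E p e}"
    and ex_coeffs_eq_0: "\<exists>m\<in>E. coeffs E p m = 0"
    and support_subset: "support E p \<subseteq> E"
proof -
  obtain F m where F: "\<forall>e\<in>E. 0 \<le> F e" "m \<in> E" "F m = 0" "\<forall>e. e \<notin> E \<longrightarrow> F e = 0"
    "p = (\<Sum>e\<in>E. F e *\<^sub>R e)"
    using ex_nonneg_coeffs[of p] by blast
  note support = support_eq_if_nonneg_coeffs[OF F]
  note coeffs = coeffs_eq_if_nonneg_coeffs[OF F]
  show "0 \<le> coeffs E p e" using F(1,4) by (cases "e \<in> E") (auto simp: coeffs)
  show "(\<Sum>e\<in>E. coeffs E p e *\<^sub>R e) = p" by (simp add: coeffs F(5)[symmetric])
  show "support E p = {e. 0 < coeffs E p e}" using F(4) by (auto simp: support coeffs)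
  show "\<exists>m\<in>E. coeffs E p m = 0" using F(2,3) by (auto simp: coeffs)
  show "support E p \<subseteq> E" by (auto simp: support)
qed

lemma
  assumes "e \<in> E"
  shows support_vertex: "support E e = {e}" and coeffs_vertex: "coeffs E e e = 1"
proof -
  define F where "F x = (if x = e then 1 else 0 :: real)" for x
  have "card (E - {e}) = DIM('a)" using card_Diff_singleton[OF assms] card_E by simp
  then obtain m where m: "m \<in> E" "m \<noteq> e"
    using DIM_positive[where 'a='a] by (metis card.empty less_irrefl Diff_iff all_not_in_conv insertI1)
  have "(\<Sum>x\<in>E. F x *\<^sub>R x) = (\<Sum>x\<in>E. if x = e then x else 0)"
    by (rule sum.cong) (auto simp: F_def)
  then have e_sum: "e = (\<Sum>x\<in>E. F x *\<^sub>R x)" using assms finite_E by simp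
  have "\<forall>x\<in>E. 0 \<le> F x" "F m = 0" "\<forall>x. x \<notin> E \<longrightarrow> F x = 0"
    using m assms by (auto simp: F_def)
  note F = this(1) m(1) this(2,3) e_sum
  show "support E e = {e}" using support_eq_if_nonneg_coeffs[OF F] assms by (auto simp: F_def)
  show "coeffs E e e = 1" using coeffs_eq_if_nonneg_coeffs[OF F] by (simp add: F_def)
qed

lemma min_coeff_le: "e \<in> support E p \<Longrightarrow> min_coeff E p \<le> coeffs E p e"
  unfolding min_coeff_def using finite_subset[OF support_subset finite_E] by simp

lemma min_coeff_attained:
  assumes "support E p \<noteq> {}"
  obtains i where "i \<in> support E p" "coeffs E p i = min_coeff E p"
  using Min_in[of "coeffs E p ` support E p"] finite_subset[OF support_subset finite_E] assms
  unfolding min_coeff_def by fastforce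

lemma min_coeff_pos: "support E p \<noteq> {} \<Longrightarrow> 0 < min_coeff E p"
  by (metis min_coeff_attained mem_Collect_eq support_eq_pos_coeffs)

lemma strange_index_iff:
  "strange_index E p e \<longleftrightarrow> e \<in> support E p \<and> min_coeff E p < coeffs E p e"
proof (cases "e \<in> support E p")
  case True
  then have "0 < min_coeff E p" using min_coeff_pos by blast
  then show ?thesis
    unfolding strange_index_def norm_coeffs_def min_coeff_def[symmetric] by (simp add: less_divide_eq)
qed (simp add: strange_index_def)

lemma strange_index_not_vertex: "strange_index E p e \<Longrightarrow> p \<notin> E"
  by (auto simp: strange_index_iff min_coeff_def support_vertex coeffs_vertex)

lemma relation_coeffs_const:
  assumes P: "finite P" "P \<inter> E = {}" and B: "B \<subseteq> E"
    and rel: "(\<Sum>a\<in>P \<union> B. d a *\<^sub>R a) = 0" and xy: "x \<in> E" "y \<in> E"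
  defines "h e \<equiv> (\<Sum>a\<in>P. d a * coeffs E a e) + (if e \<in> B then d e else 0)"
  shows "h x = h y"
proof -
  have "(\<Sum>a\<in>P. d a *\<^sub>R a) = (\<Sum>a\<in>P. d a *\<^sub>R (\<Sum>e\<in>E. coeffs E a e *\<^sub>R e))"
    by (simp add: lincomb_coeffs)
  also have "\<dots> = (\<Sum>e\<in>E. (\<Sum>a\<in>P. d a * coeffs E a e) *\<^sub>R e)"
    by (simp add: scaleR_sum_right scaleR_sum_left sum.swap[of _ P])
  finally have "(\<Sum>a\<in>P. d a *\<^sub>R a) = (\<Sum>e\<in>E. (\<Sum>a\<in>P. d a * coeffs E a e) *\<^sub>R e)" .
  moreover have "(\<Sum>a\<in>B. d a *\<^sub>R a) = (\<Sum>e\<in>E. (if e \<in> B then d e else 0) *\<^sub>R e)"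
    by (rule sum.mono_neutral_cong_left[OF finite_E B]) auto
  moreover have "(\<Sum>a\<in>P \<union> B. d a *\<^sub>R a) = (\<Sum>a\<in>P. d a *\<^sub>R a) + (\<Sum>a\<in>B. d a *\<^sub>R a)"
    using P B finite_subset[OF B finite_E] by (intro sum.union_disjoint) auto
  ultimately have "(\<Sum>e\<in>E. h e *\<^sub>R e) = 0"
    using rel by (simp add: h_def scaleR_add_left sum.distrib)
  then show ?thesis using const_coeffs_if_lincomb_eq_0[OF finite_E indep_E sum_E] xy by blast
qed

text \<open>
  In a relation d among the new points every remaining vertex v has coefficient
  d v = d p * (coeffs p i - coeffs p v). This is negative at m if d p = -1, and has the sign of
  - d p at x and y.
\<close>
lemma conical_position_exchange_vertex:
  assumes p: "p \<notin> E" and i: "i \<in> E" "0 < coeffs E p i" and m: "m \<in> E" "coeffs E p m = 0"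
    and xy: "x \<in> E" "y \<in> E" "x \<noteq> y" "coeffs E p i < coeffs E p x" "coeffs E p i < coeffs E p y"
  shows "conical_position ({p} \<union> (E - {i}))" (is "conical_position ?A")
proof -
  define F where "F = coeffs E p"
  have rel: "d v = d p * (F i - F v)" if "(\<Sum>a\<in>?A. d a *\<^sub>R a) = 0" "v \<in> E - {i}" for d v
    using relation_coeffs_const[of "{p}" "E - {i}" d v i] that p i(1)
    by (simp add: F_def algebra_simps)
  have dp_eq_0: "d p = 0"
    if "(\<Sum>a\<in>?A. d a *\<^sub>R a) = 0" "0 \<le> d p" "v \<in> E - {i}" "0 \<le> d v" "F i < F v" for d v
    using rel[OF that(1,3)] that(2,4,5) by (simp add: zero_le_mult_iff)
  have xy_A: "x \<in> E - {i}" "y \<in> E - {i}" using xy by auto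
  show ?thesis
  proof (rule conical_positionI)
    show "finite ?A" using finite_E by simp
  next
    fix d assume d: "(\<Sum>a\<in>?A. d a *\<^sub>R a) = 0" "\<forall>a\<in>?A. 0 \<le> d a"
    then have "d p = 0" using dp_eq_0[OF d(1) _ xy_A(1)] xy_A(1) xy(4) by (simp add: F_def)
    then show "\<forall>a\<in>?A. d a = 0" using rel[OF d(1)] by simp
  next
    fix d a0 assume a0: "a0 \<in> ?A" and d: "(\<Sum>a\<in>?A. d a *\<^sub>R a) = 0" "d a0 = -1"
      "\<forall>a\<in>?A - {a0}. 0 \<le> d a"
    show False
    proof (cases "a0 = p")
      case True
      have m_A: "m \<in> E - {i}" using m i by auto
      then have "0 \<le> d m" using d(3) True p m(1) by auto
      then show False using rel[OF d(1) m_A] d(2) True m(2) i(2) by (simp add: F_def)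
    next
      case False
      define v where "v = (if a0 = x then y else x)"
      have v: "v \<in> E - {i}" "v \<noteq> a0" "F i < F v"
        using xy_A xy(3-5) by (auto simp: v_def F_def)
      have "d p = 0" using dp_eq_0[OF d(1) _ v(1) _ v(3)] d(3) v(1,2) False p by auto
      then show False using rel[OF d(1)] d(2) a0 False by simp
    qed
  qed
qed

text \<open>
  In a relation d among the new points, d p * coeffs p r + d q * coeffs q r = 0 (read off at r).
  If d p = -1, the coefficient of k, multiplied by coeffs q r > 0, becomes
  coeffs p k * coeffs q r - coeffs q k * coeffs p r < 0; symmetrically for d q = -1 and j.
\<close>
lemma conical_position_exchange_two_vertices:
  assumes pq: "p \<notin> E" "q \<notin> E" "p \<noteq> q"
    and r: "r \<in> E" "0 < coeffs E p r" "0 < coeffs E q r"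
    and m: "m \<in> E" "coeffs E p m = 0" "coeffs E q m = 0"
    and jk: "j \<in> E - {r, m}" "k \<in> E - {r, m}"
    and j_cross: "coeffs E q j * coeffs E p r < coeffs E p j * coeffs E q r"
    and k_cross: "coeffs E p k * coeffs E q r < coeffs E q k * coeffs E p r"
  shows "conical_position ({p, q} \<union> (E - {r, m}))" (is "conical_position ?A")
proof -
  define F where "F = coeffs E p"
  define G where "G = coeffs E q"
  define B where "B = E - {r, m}"
  have rel: "d p * F v + d q * G v + (if v \<in> B then d v else 0) = 0"
    if "(\<Sum>a\<in>{p, q} \<union> B. d a *\<^sub>R a) = 0" "v \<in> E" for d v
    using relation_coeffs_const[of "{p, q}" B d v m] that pq m by (simp add: B_def F_def G_def)
  have rel_r: "d p * F r + d q * G r = 0" if "(\<Sum>a\<in>{p, q} \<union> B. d a *\<^sub>R a) = 0" for d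
    using rel[OF that r(1)] by (simp add: B_def)
  have rel_B: "d v = - (d p * F v + d q * G v)"
    if "(\<Sum>a\<in>{p, q} \<union> B. d a *\<^sub>R a) = 0" "v \<in> B" for d v
    using rel[OF that(1)] that(2) by (force simp: B_def)
  have pq_B: "p \<notin> B" "q \<notin> B" using pq by (auto simp: B_def)
  have jk_B: "j \<in> B" "k \<in> B" using jk by (auto simp: B_def)
  have dpq_eq_0: "d p = 0" "d q = 0"
    if "(\<Sum>a\<in>{p, q} \<union> B. d a *\<^sub>R a) = 0" "0 \<le> d p" "0 \<le> d q" for d
  proof -
    have "0 \<le> d p * F r" "0 \<le> d q * G r" using that(2,3) r by (simp_all add: F_def G_def)
    then have "d p * F r = 0" "d q * G r = 0" using rel_r[OF that(1)] by linarith+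
    then show "d p = 0" "d q = 0" using r by (simp_all add: F_def G_def)
  qed
  have A: "?A = {p, q} \<union> B" by (simp add: B_def)
  show ?thesis unfolding A
  proof (rule conical_positionI)
    show "finite ({p, q} \<union> B)" using finite_E by (simp add: B_def)
  next
    fix d assume d: "(\<Sum>a\<in>{p, q} \<union> B. d a *\<^sub>R a) = 0" "\<forall>a\<in>{p, q} \<union> B. 0 \<le> d a"
    then have "d p = 0" "d q = 0" using dpq_eq_0 by simp_all
    then show "\<forall>a\<in>{p, q} \<union> B. d a = 0" using rel_B[OF d(1)] by auto
  next
    fix d a0 assume a0: "a0 \<in> {p, q} \<union> B" and d: "(\<Sum>a\<in>{p, q} \<union> B. d a *\<^sub>R a) = 0"
      "d a0 = -1" "\<forall>a\<in>{p, q} \<union> B - {a0}. 0 \<le> d a"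
    note rel_r = rel_r[OF d(1)] and rel_B = rel_B[OF d(1)]
    consider "a0 = p" | "a0 = q" | "a0 \<in> B" using a0 by auto
    then show False
    proof cases
      case 1
      have d_k: "d k = F k - d q * G k" using rel_B[OF jk_B(2)] d(2) 1 by simp
      have "d k * G r = F k * G r - G k * (d q * G r)" unfolding d_k by (simp add: algebra_simps)
      also have "\<dots> = F k * G r - G k * F r" using rel_r d(2) 1 by simp
      finally have "d k * G r < 0" using k_cross by (simp add: F_def G_def)
      moreover have "0 \<le> d k" using d(3) 1 jk_B(2) pq_B by auto
      ultimately show False using r(3) by (simp add: G_def mult_less_0_iff)
    next
      case 2
      have d_j: "d j = G j - d p * F j" using rel_B[OF jk_B(1)] d(2) 2 by simp
      have "d j * F r = G j * F r - F j * (d p * F r)" unfolding d_j by (simp add: algebra_simps)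
      also have "\<dots> = G j * F r - F j * G r" using rel_r d(2) 2 by simp
      finally have "d j * F r < 0" using j_cross by (simp add: F_def G_def)
      moreover have "0 \<le> d j" using d(3) 2 jk_B(1) pq_B pq(3) by auto
      ultimately show False using r(2) by (simp add: F_def mult_less_0_iff)
    next
      case 3
      have "0 \<le> d p" "0 \<le> d q" using d(3) 3 pq_B by auto
      then have "d p = 0" "d q = 0" using dpq_eq_0 d(1) by simp_all
      then show False using rel_B[OF 3] d(2) by simp
    qed
  qed
qed

end

locale good_configuration = centred_simplex E for E :: "'a::euclidean_space set" +
  fixes X :: "'a set"
  assumes E_subset_X: "E \<subseteq> X"
    and good_X: "\<forall>A. A \<subseteq> X \<and> card A = DIM('a) + 1 \<longrightarrow> good_position A"
begin

lemma not_conical_position_exchange: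
  assumes P: "finite P" "P \<subseteq> X" "P \<inter> E = {}" and R: "R \<subseteq> E" "card R = card P"
  shows "\<not> conical_position (P \<union> (E - R))"
proof -
  have "card (P \<union> (E - R)) = card P + card (E - R)"
    using P finite_E by (intro card_Un_disjoint) auto
  also have "\<dots> = card E"
    using R card_Diff_subset[OF finite_subset[OF R(1) finite_E] R(1)] card_mono[OF finite_E R(1)]
    by simp
  finally have "card (P \<union> (E - R)) = card E" .
  moreover have "P \<union> (E - R) \<subseteq> X" using P E_subset_X by auto
  ultimately show ?thesis using good_X card_E by (simp add: good_position_def)
qed

lemma coeffs_eq_min_coeff_if_strange_index:
  assumes p: "p \<in> X" and j: "strange_index E p j" and e: "e \<in> support E p" "e \<noteq> j"
  shows "coeffs E p e = min_coeff E p"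
proof (rule ccontr)
  assume "coeffs E p e \<noteq> min_coeff E p"
  then have e_min: "min_coeff E p < coeffs E p e" using min_coeff_le[OF e(1)] by simp
  have j_min: "min_coeff E p < coeffs E p j" and j_supp: "j \<in> support E p"
    using j by (simp_all add: strange_index_iff)
  obtain i where i: "i \<in> support E p" "coeffs E p i = min_coeff E p"
    using min_coeff_attained[of p] e(1) by blast
  obtain m where m: "m \<in> E" "coeffs E p m = 0" using ex_coeffs_eq_0 by blast
  have i_E: "i \<in> E" and i_pos: "0 < coeffs E p i"
    using i(1) support_subset support_eq_pos_coeffs by auto
  have p_E: "p \<notin> E" using strange_index_not_vertex[OF j] .
  have "conical_position ({p} \<union> (E - {i}))"
    using e_min j_min e j_supp support_subset i(2)
    by (intro conical_position_exchange_vertex[OF p_E i_E i_pos m, of e j]) auto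
  moreover have "\<not> conical_position ({p} \<union> (E - {i}))"
    using p p_E i_E by (intro not_conical_position_exchange) auto
  ultimately show False by contradiction
qed

lemma strange_indices_eq:
  assumes p: "p \<in> X" and q: "q \<in> X" and same_supp: "support E p = support E q"
    and supp_card: "2 < card (support E p)"
    and j: "strange_index E p j" and k: "strange_index E q k"
  shows "j = k"
proof (rule ccontr)
  assume "j \<noteq> k"
  define S where "S = support E p"
  define F where "F = coeffs E p"
  define G where "G = coeffs E q"
  define Lp where "Lp = min_coeff E p"
  define Lq where "Lq = min_coeff E q"
  have jk_S: "j \<in> S" "k \<in> S" and j_Lp: "Lp < F j" and k_Lq: "Lq < G k"
    using j k same_supp by (auto simp: strange_index_iff S_def F_def G_def Lp_def Lq_def)
  have F_S: "F x = Lp" if "x \<in> S" "x \<noteq> j" for x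
    using coeffs_eq_min_coeff_if_strange_index[OF p j] that by (simp add: S_def F_def Lp_def)
  have G_S: "G x = Lq" if "x \<in> S" "x \<noteq> k" for x
    using coeffs_eq_min_coeff_if_strange_index[OF q k] that same_supp
    by (simp add: S_def G_def Lq_def)
  have L_pos: "0 < Lp" "0 < Lq"
    using min_coeff_pos jk_S same_supp by (auto simp: S_def Lp_def Lq_def)
  have "p \<noteq> q" using F_S[OF jk_S(2)] k_Lq \<open>j \<noteq> k\<close> by (auto simp: F_def G_def Lp_def Lq_def)
  have pq_E: "p \<notin> E" "q \<notin> E" using strange_index_not_vertex j k by blast+
  have "card (S - {j, k}) = card S - 2"
    using card_Diff_subset[of "{j, k}" S] jk_S \<open>j \<noteq> k\<close> by simp
  then have "card (S - {j, k}) \<noteq> 0" using supp_card by (simp add: S_def)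
  then obtain r where r: "r \<in> S" "r \<noteq> j" "r \<noteq> k" by (metis card.empty ex_in_conv DiffE insertCI)
  obtain m where m: "m \<in> E" "F m = 0" using ex_coeffs_eq_0 by (auto simp: F_def)
  have S_pos: "S = {x. 0 < F x}" "S = {x. 0 < G x}"
    using support_eq_pos_coeffs same_supp by (auto simp: S_def F_def G_def)
  have r_E: "r \<in> E" and jk_E: "j \<in> E" "k \<in> E"
    using r(1) jk_S support_subset by (auto simp: S_def)
  have m_S: "m \<notin> S" using m(2) S_pos(1) by simp
  have G_m: "G m = 0" using m_S coeffs_nonneg[of q m] S_pos(2) by (auto simp: G_def)
  have "r \<noteq> m" using r(1) m_S by blast
  have "\<not> conical_position ({p, q} \<union> (E - {r, m}))"
    using p q pq_E r_E m(1) \<open>p \<noteq> q\<close> \<open>r \<noteq> m\<close> by (intro not_conical_position_exchange) auto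
  moreover have "conical_position ({p, q} \<union> (E - {r, m}))"
  proof (rule conical_position_exchange_two_vertices[OF pq_E \<open>p \<noteq> q\<close> r_E _ _ m(1)])
    show "0 < coeffs E p r" "0 < coeffs E q r" "coeffs E p m = 0" "coeffs E q m = 0"
      using r(1) S_pos m(2) G_m by (auto simp: F_def G_def)
    show "j \<in> E - {r, m}" "k \<in> E - {r, m}" using jk_E jk_S r m_S by auto
    show "coeffs E q j * coeffs E p r < coeffs E p j * coeffs E q r"
      using G_S[OF jk_S(1)] F_S[OF r(1,2)] G_S[OF r(1,3)] j_Lp L_pos \<open>j \<noteq> k\<close>
      by (simp add: F_def G_def mult.commute)
    show "coeffs E p k * coeffs E q r < coeffs E q k * coeffs E p r"
      using F_S[OF jk_S(2)] F_S[OF r(1,2)] G_S[OF r(1,3)] k_Lq L_pos \<open>j \<noteq> k\<close>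
      by (simp add: F_def G_def mult.commute)
  qed
  ultimately show False by contradiction
qed

end

theorem proposition6p3:
  fixes E X :: "(real ^ 'n) set" and p q ej ek :: "real ^ 'n"
  assumes E_card: "card E = CARD('n) + 1"
    and E_simplex: "\<not> affine_dependent E"
    and E_sum: "(\<Sum>e\<in>E. e) = 0"
    and X_fin: "finite X"
    and X_nz: "0 \<notin> X"
    and E_sub: "E \<subseteq> X"
    and X_nomult: "\<forall>x\<in>X. \<forall>y\<in>X. \<forall>c::real. c > 0 \<and> y = c *\<^sub>R x \<longrightarrow> x = y"
    and X_good: "\<forall>A. A \<subseteq> X \<and> card A = CARD('n) + 1 \<longrightarrow> good_position A"
    and p: "p \<in> X" and q: "q \<in> X"
    and same_supp: "support E p = support E q"
    and supp_card: "card (support E p) > 2"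
    and sp: "strange_index E p ej"
    and sq: "strange_index E q ek"
  shows "ej = ek"
proof -
  interpret good_configuration E X
    using E_card E_simplex E_sum E_sub X_good by unfold_locales simp_all
  show ?thesis using strange_indices_eq[OF p q same_supp supp_card sp sq] .
qed

end
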